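(* $$\sum_{n=1}^\infty \frac{3^n H_n \binom{2n}{n}}{n\, 2^{4n}} = 2\,\mathrm{Li}_2\!\left(\tfrac{1}{3}\right).$$
   Context: $H_n=\sum_{k=1}^n \frac{1}{k}$ denotes the $n$-th harmonic number and $\binom{2n}{n}$ the central binomial coefficient; $\mathrm{Li}_2(x)=\sum_{m=1}^\infty \frac{x^m}{m^2}$ for $|x|\le 1$ is the dilogarithm. *)

theory Defs
  imports "HOL-Analysis.Analysis"
begin

definition Li2 :: "real \<Rightarrow> real" where
  "Li2 x = (\<Sum>m. x ^ Suc m / (real (Suc m))\<^sup>2)"

end

theory Submission
  imports Defs "HOL-Real_Asymp.Real_Asymp"
begin

(* Let C, H and G be the generating functions of binom(2n,n), binom(2n,n) H_n and
   binom(2n,n) H_n / n. The recurrence (n+1) binom(2n+2,n+1) = (4n+2) binom(2n,n) and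
   H_(n+1) = H_n + 1/(n+1) give the differential equations
     (1 - 4x) C' = 2 C,    x (1 - 4x) H' = 2 x H + C - 1,    x G' = H.
   The substitution x = y (1 - y) rationalises sqrt(1 - 4x) = 1 - 2y, and along it the
   equations integrate to C = 1/(1 - 2y), (1 - 2y) H = 2 ln((1 - y)/(1 - 2y)) and
   G = 2 Li2(y/(1 - y)); each is verified by showing that the difference of the two sides
   has vanishing derivative in y. The theorem is the case y = 1/4, i.e. x = 3/16. *)

section \<open>Power series and derivatives\<close>

lemma conv_radius_mono_norm:
  fixes f g :: "nat \<Rightarrow> 'a :: {banach, real_normed_div_algebra}"
  assumes "\<And>n. norm (f n) \<le> norm (g n)"
  shows "conv_radius g \<le> conv_radius f"
proof (rule conv_radius_geI_ex')
  fix r :: real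
  assume "0 < r" "ereal r < conv_radius g"
  then have "summable (\<lambda>n. norm (g n * of_real r ^ n))"
    by (intro abs_summable_in_conv_radius) simp
  then show "summable (\<lambda>n. f n * of_real r ^ n)"
    by (rule summable_comparison_test') (use assms in \<open>auto simp: norm_mult intro: mult_right_mono\<close>)
qed

lemma less_fps_conv_radius_add:
  assumes "norm z < fps_conv_radius f" "norm z < fps_conv_radius g"
  shows "norm z < fps_conv_radius (f + g)"
  using assms by (intro less_le_trans[OF _ fps_conv_radius_add]) simp

lemma less_fps_conv_radius_diff:
  assumes "norm z < fps_conv_radius f" "norm z < fps_conv_radius g"
  shows "norm z < fps_conv_radius (f - g)"
  using assms by (intro less_le_trans[OF _ fps_conv_radius_diff]) simp

lemma less_fps_conv_radius_mult:
  assumes "norm z < fps_conv_radius f" "norm z < fps_conv_radius g"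
  shows "norm z < fps_conv_radius (f * g)"
  using assms by (intro less_le_trans[OF _ fps_conv_radius_mult]) simp

lemma less_fps_conv_radius_deriv:
  fixes f :: "'a :: {banach, real_normed_field} fps"
  assumes "norm z < fps_conv_radius f"
  shows "norm z < fps_conv_radius (fps_deriv f)"
  using assms fps_conv_radius_deriv[of f] by (rule less_le_trans)

(* Conditional simp rules for the side conditions of eval_fps_add/diff/mult. For real z
   they only match while real_norm_def is removed from the simpset. *)
lemmas less_fps_conv_radius_intros =
  less_fps_conv_radius_add less_fps_conv_radius_diff less_fps_conv_radius_mult less_fps_conv_radius_deriv

lemma has_field_derivative_eval_fps_comp:
  fixes f :: "'a :: {banach, real_normed_field} fps"
  assumes "(g has_field_derivative g') (at y)" "norm (g y) < fps_conv_radius f"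
    and "D = eval_fps (fps_deriv f) (g y) * g'"
  shows "((\<lambda>y. eval_fps f (g y)) has_field_derivative D) (at y)"
  using DERIV_chain2[OF has_field_derivative_eval_fps[OF assms(2)] assms(1)] assms(3) by simp

lemma has_field_derivative_isconst_end:
  fixes f :: "real \<Rightarrow> real"
  assumes "a \<le> b"
    and "\<And>t. t \<in> {a..b} \<Longrightarrow> (f has_field_derivative f' t) (at t)"
    and "\<And>t. t \<in> {a<..<b} \<Longrightarrow> f' t = 0"
  shows "f b = f a"
proof (cases "a = b")
  case False
  show ?thesis
  proof (rule DERIV_isconst_end[where f = f])
    show "continuous_on {a..b} f"
      by (rule DERIV_continuous_on, rule has_field_derivative_at_within, rule assms(2))
    show "(f has_field_derivative 0) (at t)" if "a < t" "t < b" for t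
      using assms(2,3)[of t] that by simp
  qed (use assms(1) False in simp)
qed simp

section \<open>The generating functions\<close>

(* The constant coefficients of central_binomial_harm_div_fps and dilog_fps are 0,
   by the convention x / 0 = 0. *)

definition central_binomial_fps :: "real fps" where
  "central_binomial_fps = Abs_fps (\<lambda>n. real ((2 * n) choose n))"

definition central_binomial_harm_fps :: "real fps" where
  "central_binomial_harm_fps = Abs_fps (\<lambda>n. real ((2 * n) choose n) * harm n)"

definition central_binomial_harm_div_fps :: "real fps" where
  "central_binomial_harm_div_fps = Abs_fps (\<lambda>n. real ((2 * n) choose n) * harm n / real n)"

definition dilog_fps :: "real fps" where
  "dilog_fps = Abs_fps (\<lambda>n. 1 / (real n)\<^sup>2)"

lemma central_binomial_Suc:
  "real (Suc n) * real ((2 * Suc n) choose Suc n) = (4 * real n + 2) * real ((2 * n) choose n)"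
proof -
  have "Suc n * ((2 * Suc n) choose Suc n) = Suc (2 * n + 1) * ((2 * n + 1) choose n)"
    using Suc_times_binomial[of n "2 * n + 1"] by simp
  also have "(2 * n + 1) choose n = (2 * n + 1) choose Suc n"
    using binomial_symmetric[of n "2 * n + 1"] by simp
  also have "Suc (2 * n + 1) * \<dots> = 2 * (Suc n * ((2 * n + 1) choose Suc n))"
    by simp
  also have "Suc n * ((2 * n + 1) choose Suc n) = (2 * n + 1) * ((2 * n) choose n)"
    using Suc_times_binomial[of n "2 * n"] by simp
  finally have "Suc n * ((2 * Suc n) choose Suc n) = 2 * (2 * n + 1) * ((2 * n) choose n)"
    by simp
  then have "real (Suc n * ((2 * Suc n) choose Suc n)) = real (2 * (2 * n + 1) * ((2 * n) choose n))"
    by (rule arg_cong)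
  then show ?thesis
    by (simp only: of_nat_mult) simp
qed

lemma central_binomial_fps_ode:
  "(1 - 4 * fps_X) * fps_deriv central_binomial_fps = 2 * central_binomial_fps"
proof (rule fps_ext)
  fix n
  show "fps_nth ((1 - 4 * fps_X) * fps_deriv central_binomial_fps) n = fps_nth (2 * central_binomial_fps) n"
    using central_binomial_Suc[of n] central_binomial_Suc[of "n - 1"]
    by (cases n) (auto simp: central_binomial_fps_def algebra_simps)
qed

lemma central_binomial_harm_fps_ode:
  "fps_X * ((1 - 4 * fps_X) * fps_deriv central_binomial_harm_fps)
     = 2 * fps_X * central_binomial_harm_fps + central_binomial_fps - 1"
proof (rule fps_ext)
  fix n
  show "fps_nth (fps_X * ((1 - 4 * fps_X) * fps_deriv central_binomial_harm_fps)) n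
      = fps_nth (2 * fps_X * central_binomial_harm_fps + central_binomial_fps - 1) n"
  proof (cases n)
    case (Suc m)
    have "real (Suc m) * real ((2 * Suc m) choose Suc m) * harm (Suc m)
        = (4 * real m + 2) * real ((2 * m) choose m) * harm m + real ((2 * Suc m) choose Suc m)"
      using central_binomial_Suc[of m] by (simp add: harm_Suc field_simps del: of_nat_Suc binomial_Suc_Suc)
    with Suc show ?thesis
      by (cases m) (auto simp: central_binomial_harm_fps_def central_binomial_fps_def algebra_simps)
  qed (simp add: central_binomial_fps_def)
qed

lemma central_binomial_harm_div_fps_ode:
  "fps_X * fps_deriv central_binomial_harm_div_fps = central_binomial_harm_fps"
  by (rule fps_ext) (auto simp: central_binomial_harm_div_fps_def central_binomial_harm_fps_def
      harm_expand(1) simp del: of_nat_Suc)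

lemma fps_conv_radius_central_binomial_fps: "fps_conv_radius central_binomial_fps = ereal (1/4)"
  unfolding fps_conv_radius_def
proof (rule conv_radius_ratio_limit_nonzero)
  have "norm (fps_nth central_binomial_fps n) / norm (fps_nth central_binomial_fps (Suc n))
      = (real n + 1) / (4 * real n + 2)" for n
    using central_binomial_Suc[of n]
    by (simp add: central_binomial_fps_def field_simps del: binomial_Suc_Suc)
  moreover have "(\<lambda>n. (real n + 1) / (4 * real n + 2)) \<longlonglongrightarrow> 1/4"
    by real_asymp
  ultimately show "(\<lambda>n. norm (fps_nth central_binomial_fps n) / norm (fps_nth central_binomial_fps (Suc n)))
      \<longlonglongrightarrow> 1/4"
    by simp
qed (simp_all add: one_ereal_def)

lemma harm_le: "harm n \<le> (real n :: real)"
  unfolding harm_def using sum_bounded_above[of "{1..n}" "\<lambda>k. inverse (real k)" 1]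
  by (simp add: inverse_le_1_iff)

lemma fps_conv_radius_central_binomial_harm_fps:
  "ereal (1/4) \<le> fps_conv_radius central_binomial_harm_fps"
proof -
  have "norm (fps_nth central_binomial_harm_fps n) \<le> norm (fps_nth (fps_deriv central_binomial_fps) n)" for n
    using harm_le[of n] central_binomial_Suc[of n]
    by (simp add: central_binomial_harm_fps_def central_binomial_fps_def abs_mult
        del: binomial_Suc_Suc of_nat_Suc)
  then have "fps_conv_radius (fps_deriv central_binomial_fps) \<le> fps_conv_radius central_binomial_harm_fps"
    unfolding fps_conv_radius_def by (rule conv_radius_mono_norm)
  then show ?thesis
    using fps_conv_radius_deriv[of central_binomial_fps] fps_conv_radius_central_binomial_fps by simp
qed

lemma fps_conv_radius_central_binomial_harm_div_fps:
  "ereal (1/4) \<le> fps_conv_radius central_binomial_harm_div_fps"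
proof -
  have "norm (a / real n) \<le> norm a" for a :: real and n
    by (cases n) (simp_all add: divide_le_eq mult_le_cancel_left1 del: of_nat_Suc)
  then have "norm (fps_nth central_binomial_harm_div_fps n) \<le> norm (fps_nth central_binomial_harm_fps n)" for n
    by (simp add: central_binomial_harm_div_fps_def central_binomial_harm_fps_def)
  then have "fps_conv_radius central_binomial_harm_fps \<le> fps_conv_radius central_binomial_harm_div_fps"
    unfolding fps_conv_radius_def by (rule conv_radius_mono_norm)
  then show ?thesis
    using fps_conv_radius_central_binomial_harm_fps by simp
qed

lemma fps_conv_radius_dilog_fps: "1 \<le> fps_conv_radius dilog_fps"
proof -
  have "conv_radius (\<lambda>_. 1 :: real) = 1"
    by (rule conv_radius_ratio_limit_nonzero[where c = 1]) (simp_all add: one_ereal_def)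
  moreover have "norm (fps_nth dilog_fps n) \<le> norm (1 :: real)" for n
    by (cases n) (simp_all add: dilog_fps_def divide_le_eq)
  ultimately show ?thesis
    unfolding fps_conv_radius_def by (metis conv_radius_mono_norm)
qed

lemma less_fps_conv_radius_dilog_fps: "\<bar>u :: real\<bar> < 1 \<Longrightarrow> norm u < fps_conv_radius dilog_fps"
  using less_le_trans[OF _ fps_conv_radius_dilog_fps, of "ereal (norm u)"] by (simp add: one_ereal_def)

lemma eval_central_binomial_fps_ode:
  assumes "\<bar>x\<bar> < 1/4"
  shows "(1 - 4 * x) * eval_fps (fps_deriv central_binomial_fps) x = 2 * eval_fps central_binomial_fps x"
proof -
  have "norm x < fps_conv_radius central_binomial_fps"
    using assms by (simp add: fps_conv_radius_central_binomial_fps)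
  moreover have "eval_fps ((1 - 4 * fps_X) * fps_deriv central_binomial_fps) x
      = eval_fps (2 * central_binomial_fps) x"
    by (simp only: central_binomial_fps_ode)
  ultimately show ?thesis
    by (simp add: eval_fps_mult eval_fps_diff less_fps_conv_radius_intros del: real_norm_def)
qed

lemma eval_central_binomial_harm_fps_ode:
  assumes "\<bar>x\<bar> < 1/4"
  shows "x * ((1 - 4 * x) * eval_fps (fps_deriv central_binomial_harm_fps) x)
    = 2 * x * eval_fps central_binomial_harm_fps x + eval_fps central_binomial_fps x - 1"
proof -
  have "norm x < fps_conv_radius central_binomial_fps"
    using assms by (simp add: fps_conv_radius_central_binomial_fps)
  moreover have "norm x < fps_conv_radius central_binomial_harm_fps"
    using assms by (intro less_le_trans[OF _ fps_conv_radius_central_binomial_harm_fps]) simp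
  moreover have "eval_fps (fps_X * ((1 - 4 * fps_X) * fps_deriv central_binomial_harm_fps)) x
      = eval_fps (2 * fps_X * central_binomial_harm_fps + central_binomial_fps - 1) x"
    by (simp only: central_binomial_harm_fps_ode)
  ultimately show ?thesis
    by (simp add: eval_fps_mult eval_fps_diff eval_fps_add less_fps_conv_radius_intros del: real_norm_def)
qed

lemma eval_central_binomial_harm_div_fps_ode:
  assumes "\<bar>x\<bar> < 1/4"
  shows "x * eval_fps (fps_deriv central_binomial_harm_div_fps) x = eval_fps central_binomial_harm_fps x"
proof -
  have "norm x < fps_conv_radius central_binomial_harm_div_fps"
    using assms by (intro less_le_trans[OF _ fps_conv_radius_central_binomial_harm_div_fps]) simp
  moreover have "eval_fps (fps_X * fps_deriv central_binomial_harm_div_fps) x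
      = eval_fps central_binomial_harm_fps x"
    by (simp only: central_binomial_harm_div_fps_ode)
  ultimately show ?thesis
    by (simp add: eval_fps_mult less_fps_conv_radius_intros del: real_norm_def)
qed

lemma eval_fps_deriv_dilog_fps:
  assumes "\<bar>u\<bar> < 1"
  shows "u * eval_fps (fps_deriv dilog_fps) u = - ln (1 - u)"
proof -
  have r: "norm u < fps_conv_radius dilog_fps"
    using assms by (rule less_fps_conv_radius_dilog_fps)
  have "fps_nth (fps_X * fps_deriv dilog_fps) n = 1 / real n" for n
    by (cases n) (simp_all add: dilog_fps_def power2_eq_square del: of_nat_Suc)
  then have "(\<lambda>n. u ^ n / real n) sums eval_fps (fps_X * fps_deriv dilog_fps) u"
    using sums_eval_fps[of u "fps_X * fps_deriv dilog_fps"] r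
    by (simp add: less_fps_conv_radius_intros del: real_norm_def)
  moreover have "(\<lambda>n. u ^ n / real n) sums - ln (1 - u)"
    using sums_minus[OF ln_series'[of "-u"]] assms by simp
  ultimately have "eval_fps (fps_X * fps_deriv dilog_fps) u = - ln (1 - u)"
    by (rule sums_unique2)
  then show ?thesis
    using r by (simp add: eval_fps_mult less_fps_conv_radius_intros del: real_norm_def)
qed

lemma Li2_eq_eval_dilog_fps:
  assumes "\<bar>u\<bar> < 1"
  shows "Li2 u = eval_fps dilog_fps u"
proof -
  have "norm u < fps_conv_radius dilog_fps"
    using assms by (rule less_fps_conv_radius_dilog_fps)
  then have "(\<lambda>n. fps_nth dilog_fps n * u ^ n) sums eval_fps dilog_fps u"
    by (rule sums_eval_fps)
  then have "(\<lambda>m. fps_nth dilog_fps (Suc m) * u ^ Suc m) sums eval_fps dilog_fps u"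
    by (subst sums_Suc_iff) (simp add: dilog_fps_def)
  then have "(\<lambda>m. u ^ Suc m / (real (Suc m))\<^sup>2) sums eval_fps dilog_fps u"
    by (simp add: dilog_fps_def del: of_nat_Suc)
  then show ?thesis
    unfolding Li2_def by (rule sums_unique[symmetric])
qed

section \<open>Closed forms along x = y (1 - y)\<close>

lemma abs_mult_one_minus_less:
  fixes y :: real
  assumes "0 \<le> y" "y < 1/2"
  shows "\<bar>y * (1 - y)\<bar> < 1/4"
proof -
  have "0 < (1/2 - y)\<^sup>2"
    using assms by simp
  then have "y * (1 - y) < 1/4"
    by (simp add: power2_eq_square algebra_simps)
  moreover have "0 \<le> y * (1 - y)"
    using assms by simp
  ultimately show ?thesis
    by simp
qed

lemma eval_central_binomial_fps:
  assumes "0 \<le> y" "y < 1/2"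
  shows "eval_fps central_binomial_fps (y * (1 - y)) = 1 / (1 - 2 * y)"
proof -
  define C where "C = central_binomial_fps"
  define \<phi> where "\<phi> t = (1 - 2 * t) * eval_fps C (t * (1 - t))" for t
  define D where "D t = (1 - 2 * t)\<^sup>2 * eval_fps (fps_deriv C) (t * (1 - t)) - 2 * eval_fps C (t * (1 - t))"
    for t
  have "\<phi> y = \<phi> 0"
  proof (rule has_field_derivative_isconst_end[of 0 y \<phi> D])
    fix t
    assume "t \<in> {0..y}"
    with assms have "norm (t * (1 - t)) < fps_conv_radius C"
      using abs_mult_one_minus_less[of t] by (simp add: C_def fps_conv_radius_central_binomial_fps)
    then show "(\<phi> has_field_derivative D t) (at t)"
      unfolding \<phi>_def D_def
      by (auto intro!: derivative_eq_intros has_field_derivative_eval_fps_comp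
          simp: algebra_simps power2_eq_square)
  next
    fix t
    assume "t \<in> {0<..<y}"
    with assms show "D t = 0"
      using eval_central_binomial_fps_ode[of "t * (1 - t)"] abs_mult_one_minus_less[of t]
      by (simp add: D_def C_def power2_eq_square algebra_simps)
  qed (use assms in simp)
  moreover have "1 - 2 * y \<noteq> 0"
    using assms by simp
  ultimately show ?thesis
    by (simp add: \<phi>_def C_def eval_fps_at_0 central_binomial_fps_def field_simps)
qed

lemma central_binomial_harm_fps_ode_subst:
  assumes "0 < t" "t < 1/2"
  shows "(1 - 2 * t)\<^sup>2 * eval_fps (fps_deriv central_binomial_harm_fps) (t * (1 - t))
      - 2 * eval_fps central_binomial_harm_fps (t * (1 - t)) = 2 / ((1 - t) * (1 - 2 * t))"
proof -
  define x where "x = t * (1 - t)"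
  define a where "a = eval_fps (fps_deriv central_binomial_harm_fps) x"
  define b where "b = eval_fps central_binomial_harm_fps x"
  have nz: "x \<noteq> 0" "1 - t \<noteq> 0" "1 - 2 * t \<noteq> 0"
    using assms by (auto simp: x_def)
  have ode: "x * ((1 - 4 * x) * a) = 2 * x * b + 1 / (1 - 2 * t) - 1"
    using eval_central_binomial_harm_fps_ode[of x] eval_central_binomial_fps[of t]
      abs_mult_one_minus_less[of t] assms
    by (simp add: a_def b_def x_def)
  have sq: "(1 - 2 * t)\<^sup>2 = 1 - 4 * x"
    by (simp add: x_def power2_eq_square algebra_simps)
  have "x * ((1 - 2 * t)\<^sup>2 * a - 2 * b) = x * ((1 - 4 * x) * a) - 2 * x * b"
    unfolding sq by (simp add: algebra_simps)
  also have "\<dots> = 2 * t / (1 - 2 * t)"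
    using ode nz by (simp add: field_simps)
  finally have "(1 - 2 * t)\<^sup>2 * a - 2 * b = 2 * t / (1 - 2 * t) / x"
    using nz by (simp add: eq_divide_eq ac_simps)
  also have "\<dots> = 2 / ((1 - t) * (1 - 2 * t))"
    using nz by (simp add: x_def)
  finally show ?thesis
    by (simp add: a_def b_def x_def)
qed

lemma eval_central_binomial_harm_fps:
  assumes "0 \<le> y" "y < 1/2"
  shows "(1 - 2 * y) * eval_fps central_binomial_harm_fps (y * (1 - y)) = 2 * (ln (1 - y) - ln (1 - 2 * y))"
proof -
  define H where "H = central_binomial_harm_fps"
  define \<psi> where "\<psi> t = (1 - 2 * t) * eval_fps H (t * (1 - t)) - 2 * (ln (1 - t) - ln (1 - 2 * t))" for t
  define D where "D t = (1 - 2 * t)\<^sup>2 * eval_fps (fps_deriv H) (t * (1 - t)) - 2 * eval_fps H (t * (1 - t))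
      + 2 / (1 - t) - 4 / (1 - 2 * t)" for t
  have "\<psi> y = \<psi> 0"
  proof (rule has_field_derivative_isconst_end[of 0 y \<psi> D])
    fix t
    assume t: "t \<in> {0..y}"
    then have "norm (t * (1 - t)) < fps_conv_radius H"
      using assms abs_mult_one_minus_less[of t] unfolding H_def
      by (intro less_le_trans[OF _ fps_conv_radius_central_binomial_harm_fps]) simp
    moreover have "1 - t > 0" "1 - 2 * t > 0"
      using t assms by auto
    ultimately show "(\<psi> has_field_derivative D t) (at t)"
      unfolding \<psi>_def D_def
      by (auto intro!: derivative_eq_intros has_field_derivative_eval_fps_comp
          simp: algebra_simps power2_eq_square diff_divide_distrib)
  next
    fix t
    assume t: "t \<in> {0<..<y}"
    then have "1 - t \<noteq> 0" "1 - 2 * t \<noteq> 0"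
      using assms by auto
    then have "2 / (1 - t) - 4 / (1 - 2 * t) = - (2 / ((1 - t) * (1 - 2 * t)))"
      by (simp add: field_simps)
    with central_binomial_harm_fps_ode_subst[of t] t assms show "D t = 0"
      by (simp add: D_def H_def)
  qed (use assms in simp)
  then show ?thesis
    by (simp add: \<psi>_def H_def eval_fps_at_0 central_binomial_harm_fps_def harm_expand(1))
qed

lemma eval_fps_deriv_dilog_fps_subst:
  assumes "0 \<le> t" "t < 1/2"
  shows "t / (1 - t) * eval_fps (fps_deriv dilog_fps) (t / (1 - t)) = ln (1 - t) - ln (1 - 2 * t)"
proof -
  have "1 - t / (1 - t) = (1 - 2 * t) / (1 - t)" "\<bar>t / (1 - t)\<bar> < 1"
    using assms by (simp_all add: field_simps)
  with assms show ?thesis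
    using eval_fps_deriv_dilog_fps[of "t / (1 - t)"] by (simp add: ln_div)
qed

lemma eval_central_binomial_harm_div_fps:
  assumes "0 \<le> y" "y < 1/2"
  shows "eval_fps central_binomial_harm_div_fps (y * (1 - y)) = 2 * eval_fps dilog_fps (y / (1 - y))"
proof -
  define G where "G = central_binomial_harm_div_fps"
  define L where "L = dilog_fps"
  define \<theta> where "\<theta> t = eval_fps G (t * (1 - t)) - 2 * eval_fps L (t / (1 - t))" for t
  define D where "D t = (1 - 2 * t) * eval_fps (fps_deriv G) (t * (1 - t))
      - 2 * eval_fps (fps_deriv L) (t / (1 - t)) / (1 - t)\<^sup>2" for t
  have "\<theta> y = \<theta> 0"
  proof (rule has_field_derivative_isconst_end[of 0 y \<theta> D])
    fix t
    assume t: "t \<in> {0..y}"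
    then have "norm (t * (1 - t)) < fps_conv_radius G"
      using assms abs_mult_one_minus_less[of t] unfolding G_def
      by (intro less_le_trans[OF _ fps_conv_radius_central_binomial_harm_div_fps]) simp
    moreover have "norm (t / (1 - t)) < fps_conv_radius L"
      using t assms unfolding L_def by (intro less_fps_conv_radius_dilog_fps) simp
    moreover have "1 - t \<noteq> 0"
      using t assms by auto
    ultimately show "(\<theta> has_field_derivative D t) (at t)"
      unfolding \<theta>_def D_def
      by (auto intro!: derivative_eq_intros has_field_derivative_eval_fps_comp simp: field_simps power2_eq_square)
  next
    fix t
    assume t: "t \<in> {0<..<y}"
    define x where "x = t * (1 - t)"
    have "x \<noteq> 0" and xu: "x / (1 - t)\<^sup>2 = t / (1 - t)"
      using t assms by (auto simp: x_def power2_eq_square)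
    have hG: "(1 - 2 * t) * (x * eval_fps (fps_deriv G) x) = 2 * (ln (1 - t) - ln (1 - 2 * t))"
      using eval_central_binomial_harm_div_fps_ode[of x] eval_central_binomial_harm_fps[of t]
        abs_mult_one_minus_less[of t] t assms
      by (simp add: G_def x_def)
    have hL: "t / (1 - t) * eval_fps (fps_deriv L) (t / (1 - t)) = ln (1 - t) - ln (1 - 2 * t)"
      using eval_fps_deriv_dilog_fps_subst[of t] t assms by (simp add: L_def)
    have "x * D t = (1 - 2 * t) * (x * eval_fps (fps_deriv G) x)
        - 2 * (x / (1 - t)\<^sup>2 * eval_fps (fps_deriv L) (t / (1 - t)))"
      by (simp add: D_def x_def algebra_simps)
    also have "\<dots> = 0"
      unfolding xu hG hL by simp
    finally have "x * D t = 0" .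
    with \<open>x \<noteq> 0\<close> show "D t = 0"
      by simp
  qed (use assms in simp)
  then show ?thesis
    by (simp add: \<theta>_def G_def L_def eval_fps_at_0 central_binomial_harm_div_fps_def dilog_fps_def)
qed

lemma central_binomial_harm_div_sums:
  assumes "0 \<le> y" "y < 1/2"
  shows "(\<lambda>n. real ((2 * n) choose n) * harm n / real n * (y * (1 - y)) ^ n) sums (2 * Li2 (y / (1 - y)))"
proof -
  have "norm (y * (1 - y)) < fps_conv_radius central_binomial_harm_div_fps"
    using assms abs_mult_one_minus_less[of y]
    by (intro less_le_trans[OF _ fps_conv_radius_central_binomial_harm_div_fps]) simp
  then have "(\<lambda>n. fps_nth central_binomial_harm_div_fps n * (y * (1 - y)) ^ n)
      sums eval_fps central_binomial_harm_div_fps (y * (1 - y))"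
    by (rule sums_eval_fps)
  moreover have "\<bar>y / (1 - y)\<bar> < 1"
    using assms by simp
  ultimately show ?thesis
    using eval_central_binomial_harm_div_fps[OF assms]
    by (simp add: central_binomial_harm_div_fps_def Li2_eq_eval_dilog_fps)
qed

theorem mainTheorem11:
  shows "(\<lambda>n. 3 ^ (Suc n) * harm (Suc n) * real ((2 * Suc n) choose (Suc n))
              / (real (Suc n) * 2 ^ (4 * Suc n)))
         sums (2 * Li2 (1/3))"
proof -
  define a where "a = (\<lambda>n. real ((2 * n) choose n) * harm n / real n * (3/16 :: real) ^ n)"
  have "a sums (2 * Li2 (1/3))"
    using central_binomial_harm_div_sums[of "1/4"] unfolding a_def by simp
  then have "(\<lambda>n. a (Suc n)) sums (2 * Li2 (1/3))"
    by (subst sums_Suc_iff) (simp add: a_def)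
  moreover have "a (Suc n) = 3 ^ (Suc n) * harm (Suc n) * real ((2 * Suc n) choose (Suc n))
      / (real (Suc n) * 2 ^ (4 * Suc n))" for n
  proof -
    have "(2 :: real) ^ (4 * Suc n) = 16 ^ Suc n"
      by (subst power_mult) simp
    then show ?thesis
      by (simp only: a_def power_divide) simp
  qed
  ultimately show ?thesis
    by simp
qed

end
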